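(* Let $A$ and $B$ be rings, $f: A\to B$ a ring homomorphism and $J$ a proper ideal of $B$. Then: (1) If $A\bowtie^{f}J$ is a weak Armendariz ring, then $A$ is a weak Armendariz ring. (2) If $A$ and $f(A)+J$ are weak Armendariz rings, then $A\bowtie^{f}J$ is a weak Armendariz ring.
   Context: All rings are associative with identity (not necessarily commutative), ring homomorphisms are unital, and ideals are two-sided. $\mathrm{nil}(R)$ denotes the set of nilpotent elements of a ring $R$. For a ring homomorphism $f:A\to B$ and an ideal $J$ of $B$, the amalgamation is the subring $A\bowtie^{f}J=\{(a,f(a)+j)\mid a\in A,\ j\in J\}$ of $A\times B$; $f(A)+J=\{f(a)+j: a\in A, j\in J\}$ is a subring of $B$. A ring $R$ is weak Armendariz if whenever $p(x)=\sum_{i=0}^n a_ix^i$ and $q(x)=\sum_{j=0}^m b_jx^j$ in $R[x]$ satisfy $p(x)q(x)=0$, then $a_ib_j\in\mathrm{nil}(R)$ for all $i,j$. *)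

theory Defs
  imports "HOL-Algebra.Algebra"
begin

definition nil_elems :: "('a, 'b) ring_scheme \<Rightarrow> 'a set" where
  "nil_elems R = {x \<in> carrier R. \<exists>n::nat. x [^]\<^bsub>R\<^esub> n = \<zero>\<^bsub>R\<^esub>}"

definition weak_armendariz :: "('a, 'b) ring_scheme \<Rightarrow> bool" where
  "weak_armendariz R \<longleftrightarrow>
     (\<forall>p \<in> carrier (UP R). \<forall>q \<in> carrier (UP R).
        p \<otimes>\<^bsub>UP R\<^esub> q = \<zero>\<^bsub>UP R\<^esub> \<longrightarrow> (\<forall>i j. p i \<otimes>\<^bsub>R\<^esub> q j \<in> nil_elems R))"

definition amalgamation ::
  "('a, 'c) ring_scheme \<Rightarrow> ('b, 'd) ring_scheme \<Rightarrow> ('a \<Rightarrow> 'b) \<Rightarrow> 'b set \<Rightarrow> ('a \<times> 'b) ring" where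
  "amalgamation A B f J =
     (RDirProd A B)\<lparr>carrier := {(a, f a \<oplus>\<^bsub>B\<^esub> j) | a j. a \<in> carrier A \<and> j \<in> J}\<rparr>"

definition image_plus_ideal ::
  "('a, 'c) ring_scheme \<Rightarrow> ('b, 'd) ring_scheme \<Rightarrow> ('a \<Rightarrow> 'b) \<Rightarrow> 'b set \<Rightarrow> ('b, 'd) ring_scheme" where
  "image_plus_ideal A B f J =
     B\<lparr>carrier := {f a \<oplus>\<^bsub>B\<^esub> j | a j. a \<in> carrier A \<and> j \<in> J}\<rparr>"

end

theory Submission
  imports Defs
begin

text \<open>If a ring R maps by ring homomorphisms h1, h2 into weak Armendariz rings and the pair
  (h1, h2) is injective, then R is weak Armendariz: from p q = 0 over R we get
  (h_k p)(h_k q) = 0, so each h_k(a_i b_j) is nilpotent, and a common exponent kills both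
  images of a_i b_j, hence a_i b_j itself. For (1) take h1 = h2 the diagonal embedding
  a \<mapsto> (a, f a) of A into A \<bowtie>^f J; for (2) take the projections of A \<bowtie>^f J onto A
  and onto f(A) + J.\<close>

lemma UP_map_closed:
  assumes "ring R" and "ring S" and "h \<in> ring_hom R S" and p: "p \<in> carrier (UP R)"
  shows "h \<circ> p \<in> carrier (UP S)"
proof -
  interpret ring_hom_ring R S h using assms(1-3) by (rule ring_hom_ringI2)
  from p obtain n where "bound \<zero>\<^bsub>R\<^esub> n p" "\<forall>i. p i \<in> carrier R"
    by (auto simp: UP_def up_def Pi_def)
  then show ?thesis
    by (auto simp: UP_def up_def Pi_def bound_def intro!: exI[of _ n])
qed

lemma UP_map_mult:
  assumes R: "ring R" and S: "ring S" and h: "h \<in> ring_hom R S"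
    and p: "p \<in> carrier (UP R)" and q: "q \<in> carrier (UP R)"
  shows "(h \<circ> p) \<otimes>\<^bsub>UP S\<^esub> (h \<circ> q) = h \<circ> (p \<otimes>\<^bsub>UP R\<^esub> q)"
proof
  interpret ring_hom_ring R S h using R S h by (rule ring_hom_ringI2)
  fix n
  have "\<And>i. p i \<in> carrier R" "\<And>i. q i \<in> carrier R"
    using p q by (auto simp: UP_def up_def Pi_def)
  then have "h (\<Oplus>\<^bsub>R\<^esub>i \<in> {..n}. p i \<otimes>\<^bsub>R\<^esub> q (n - i))
      = (\<Oplus>\<^bsub>S\<^esub>i \<in> {..n}. h (p i) \<otimes>\<^bsub>S\<^esub> h (q (n - i)))"
    by (simp add: comp_def Pi_def)
  then show "((h \<circ> p) \<otimes>\<^bsub>UP S\<^esub> (h \<circ> q)) n = (h \<circ> (p \<otimes>\<^bsub>UP R\<^esub> q)) n"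
    using UP_map_closed[OF R S h p] UP_map_closed[OF R S h q] p q by (simp add: UP_def)
qed

lemma UP_map_zero:
  assumes "ring R" and "ring S" and "h \<in> ring_hom R S"
  shows "h \<circ> \<zero>\<^bsub>UP R\<^esub> = \<zero>\<^bsub>UP S\<^esub>"
proof -
  interpret ring_hom_ring R S h using assms by (rule ring_hom_ringI2)
  show ?thesis by (auto simp: UP_def)
qed

lemma weak_armendariz_hom_coeff_mult:
  assumes R: "ring R" and S: "ring S" and h: "h \<in> ring_hom R S"
    and W: "weak_armendariz S"
    and p: "p \<in> carrier (UP R)" and q: "q \<in> carrier (UP R)"
    and pq: "p \<otimes>\<^bsub>UP R\<^esub> q = \<zero>\<^bsub>UP R\<^esub>"
  shows "h (p i \<otimes>\<^bsub>R\<^esub> q j) \<in> nil_elems S"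
proof -
  have "(h \<circ> p) \<otimes>\<^bsub>UP S\<^esub> (h \<circ> q) = \<zero>\<^bsub>UP S\<^esub>"
    using UP_map_mult[OF R S h p q] UP_map_zero[OF R S h] pq by simp
  then have "h (p i) \<otimes>\<^bsub>S\<^esub> h (q j) \<in> nil_elems S"
    using W UP_map_closed[OF R S h p] UP_map_closed[OF R S h q]
    unfolding weak_armendariz_def by fastforce
  moreover have "p i \<in> carrier R" "q j \<in> carrier R"
    using p q by (auto simp: UP_def up_def Pi_def)
  ultimately show ?thesis using h by (simp add: ring_hom_mult)
qed

lemma nil_elems_pow_ge:
  assumes "ring R" and "x \<in> nil_elems R"
  obtains n where "\<And>m::nat. n \<le> m \<Longrightarrow> x [^]\<^bsub>R\<^esub> m = \<zero>\<^bsub>R\<^esub>"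
proof -
  interpret ring R by fact
  obtain n where x: "x \<in> carrier R" and n: "x [^]\<^bsub>R\<^esub> (n::nat) = \<zero>\<^bsub>R\<^esub>"
    using assms(2) by (auto simp: nil_elems_def)
  have "x [^]\<^bsub>R\<^esub> m = \<zero>\<^bsub>R\<^esub>" if "n \<le> m" for m :: nat
  proof -
    have "x [^]\<^bsub>R\<^esub> m = x [^]\<^bsub>R\<^esub> n \<otimes>\<^bsub>R\<^esub> x [^]\<^bsub>R\<^esub> (m - n)"
      using x that by (simp add: nat_pow_mult)
    then show ?thesis using x n by simp
  qed
  with that show thesis by blast
qed

lemma nil_elems_if_images_nil:
  assumes R: "ring R" and S1: "ring S1" and S2: "ring S2"
    and h1: "h1 \<in> ring_hom R S1" and h2: "h2 \<in> ring_hom R S2"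
    and inj: "\<And>x y. \<lbrakk>x \<in> carrier R; y \<in> carrier R; h1 x = h1 y; h2 x = h2 y\<rbrakk> \<Longrightarrow> x = y"
    and x: "x \<in> carrier R" and nil1: "h1 x \<in> nil_elems S1" and nil2: "h2 x \<in> nil_elems S2"
  shows "x \<in> nil_elems R"
proof -
  interpret R: ring R by fact
  interpret h1: ring_hom_ring R S1 h1 using R S1 h1 by (rule ring_hom_ringI2)
  interpret h2: ring_hom_ring R S2 h2 using R S2 h2 by (rule ring_hom_ringI2)
  obtain n1 where n1: "\<And>m::nat. n1 \<le> m \<Longrightarrow> h1 x [^]\<^bsub>S1\<^esub> m = \<zero>\<^bsub>S1\<^esub>"
    using nil_elems_pow_ge[OF S1 nil1] by blast
  obtain n2 where n2: "\<And>m::nat. n2 \<le> m \<Longrightarrow> h2 x [^]\<^bsub>S2\<^esub> m = \<zero>\<^bsub>S2\<^esub>"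
    using nil_elems_pow_ge[OF S2 nil2] by blast
  let ?n = "max n1 n2"
  have "h1 (x [^]\<^bsub>R\<^esub> ?n) = h1 \<zero>\<^bsub>R\<^esub>" "h2 (x [^]\<^bsub>R\<^esub> ?n) = h2 \<zero>\<^bsub>R\<^esub>"
    using x n1[of ?n] n2[of ?n] by (simp_all add: h1.hom_nat_pow h2.hom_nat_pow)
  then have "x [^]\<^bsub>R\<^esub> ?n = \<zero>\<^bsub>R\<^esub>" using x by (intro inj) simp_all
  then show ?thesis using x by (auto simp: nil_elems_def)
qed

lemma weak_armendariz_subdirect:
  assumes R: "ring R" and S1: "ring S1" and S2: "ring S2"
    and h1: "h1 \<in> ring_hom R S1" and h2: "h2 \<in> ring_hom R S2"
    and inj: "\<And>x y. \<lbrakk>x \<in> carrier R; y \<in> carrier R; h1 x = h1 y; h2 x = h2 y\<rbrakk> \<Longrightarrow> x = y"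
    and W1: "weak_armendariz S1" and W2: "weak_armendariz S2"
  shows "weak_armendariz R"
  unfolding weak_armendariz_def
proof (intro ballI impI allI)
  fix p q i j
  assume p: "p \<in> carrier (UP R)" and q: "q \<in> carrier (UP R)"
    and pq: "p \<otimes>\<^bsub>UP R\<^esub> q = \<zero>\<^bsub>UP R\<^esub>"
  have "p i \<in> carrier R" "q j \<in> carrier R"
    using p q by (auto simp: UP_def up_def Pi_def)
  then have "p i \<otimes>\<^bsub>R\<^esub> q j \<in> carrier R" using ring.ring_simprules(5)[OF R] by blast
  then show "p i \<otimes>\<^bsub>R\<^esub> q j \<in> nil_elems R"
    using nil_elems_if_images_nil[OF R S1 S2 h1 h2 inj]
      weak_armendariz_hom_coeff_mult[OF R S1 h1 W1 p q pq]
      weak_armendariz_hom_coeff_mult[OF R S2 h2 W2 p q pq]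
    by blast
qed

lemma weak_armendariz_inj_hom:
  assumes "ring R" and "ring S" and "h \<in> ring_hom R S" and "inj_on h (carrier R)"
    and "weak_armendariz S"
  shows "weak_armendariz R"
  using assms by (intro weak_armendariz_subdirect[of R S S h h]) (auto dest: inj_onD)

lemma RDirProd_simps:
  "(a, b) \<otimes>\<^bsub>RDirProd R S\<^esub> (c, d) = (a \<otimes>\<^bsub>R\<^esub> c, b \<otimes>\<^bsub>S\<^esub> d)"
  "(a, b) \<oplus>\<^bsub>RDirProd R S\<^esub> (c, d) = (a \<oplus>\<^bsub>R\<^esub> c, b \<oplus>\<^bsub>S\<^esub> d)"
  "\<one>\<^bsub>RDirProd R S\<^esub> = (\<one>\<^bsub>R\<^esub>, \<one>\<^bsub>S\<^esub>)"
  "\<zero>\<^bsub>RDirProd R S\<^esub> = (\<zero>\<^bsub>R\<^esub>, \<zero>\<^bsub>S\<^esub>)"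
  by (simp_all add: RDirProd_def DirProd_def monoid.defs)

lemma RDirProd_a_inv:
  assumes "ring R" and "ring S" and "a \<in> carrier R" and "b \<in> carrier S"
  shows "\<ominus>\<^bsub>RDirProd R S\<^esub> (a, b) = (\<ominus>\<^bsub>R\<^esub> a, \<ominus>\<^bsub>S\<^esub> b)"
proof -
  interpret ring "RDirProd R S" using RDirProd_ring[OF assms(1,2)] .
  show ?thesis
    using assms by (intro minus_equality)
      (simp_all add: RDirProd_simps RDirProd_carrier ring.ring_simprules)
qed

lemma subring_amalgamation_carrier:
  assumes A: "ring A" and B: "ring B" and f: "f \<in> ring_hom A B" and J: "ideal J B"
  shows "subring (carrier (amalgamation A B f J)) (RDirProd A B)"
proof -
  interpret B: ring B by fact
  interpret P: ring "RDirProd A B" using RDirProd_ring[OF A B] .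
  interpret J: ideal J B by fact
  interpret f: ring_hom_ring A B f using A B f by (rule ring_hom_ringI2)
  let ?C = "{(a, f a \<oplus>\<^bsub>B\<^esub> j) | a j. a \<in> carrier A \<and> j \<in> J}"
  have C: "carrier (amalgamation A B f J) = ?C"
    by (simp add: amalgamation_def)
  have Jc: "\<And>j. j \<in> J \<Longrightarrow> j \<in> carrier B" using J.a_subset by blast
  show ?thesis unfolding C
  proof (rule P.subringI)
    show "?C \<subseteq> carrier (RDirProd A B)"
      using Jc by (auto simp: RDirProd_carrier)
    show "\<one>\<^bsub>RDirProd A B\<^esub> \<in> ?C"
      by (auto simp: RDirProd_simps intro!: exI[of _ "\<zero>\<^bsub>B\<^esub>"] J.a_closed)
  next
    fix x assume "x \<in> ?C"
    then obtain a j where x: "x = (a, f a \<oplus>\<^bsub>B\<^esub> j)" "a \<in> carrier A" "j \<in> J" by blast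
    have "\<ominus>\<^bsub>B\<^esub> (f a \<oplus>\<^bsub>B\<^esub> j) = f (\<ominus>\<^bsub>A\<^esub> a) \<oplus>\<^bsub>B\<^esub> \<ominus>\<^bsub>B\<^esub> j"
      using x Jc by (simp add: B.minus_add)
    then show "\<ominus>\<^bsub>RDirProd A B\<^esub> x \<in> ?C"
      using x Jc A B by (auto simp: RDirProd_a_inv intro!: J.a_inv_closed)
  next
    fix x y assume "x \<in> ?C" and "y \<in> ?C"
    then obtain a j a' j' where x: "x = (a, f a \<oplus>\<^bsub>B\<^esub> j)" "a \<in> carrier A" "j \<in> J"
      and y: "y = (a', f a' \<oplus>\<^bsub>B\<^esub> j')" "a' \<in> carrier A" "j' \<in> J" by blast
    have c: "j \<in> carrier B" "j' \<in> carrier B" "f a \<in> carrier B" "f a' \<in> carrier B"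
      using x y Jc by auto
    have "(f a \<oplus>\<^bsub>B\<^esub> j) \<oplus>\<^bsub>B\<^esub> (f a' \<oplus>\<^bsub>B\<^esub> j') = f (a \<oplus>\<^bsub>A\<^esub> a') \<oplus>\<^bsub>B\<^esub> (j \<oplus>\<^bsub>B\<^esub> j')"
      using x y c by (simp add: B.a_ac)
    then show "x \<oplus>\<^bsub>RDirProd A B\<^esub> y \<in> ?C"
      using x y by (auto simp: RDirProd_simps intro!: J.a_closed)
    have "(f a \<oplus>\<^bsub>B\<^esub> j) \<otimes>\<^bsub>B\<^esub> (f a' \<oplus>\<^bsub>B\<^esub> j')
        = f (a \<otimes>\<^bsub>A\<^esub> a') \<oplus>\<^bsub>B\<^esub> ((f a \<otimes>\<^bsub>B\<^esub> j' \<oplus>\<^bsub>B\<^esub> j \<otimes>\<^bsub>B\<^esub> f a') \<oplus>\<^bsub>B\<^esub> j \<otimes>\<^bsub>B\<^esub> j')"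
      using x y c by (simp add: B.l_distr B.r_distr B.a_ac)
    moreover have "(f a \<otimes>\<^bsub>B\<^esub> j' \<oplus>\<^bsub>B\<^esub> j \<otimes>\<^bsub>B\<^esub> f a') \<oplus>\<^bsub>B\<^esub> j \<otimes>\<^bsub>B\<^esub> j' \<in> J"
      using x y c by (intro J.a_closed J.I_l_closed J.I_r_closed) auto
    ultimately show "x \<otimes>\<^bsub>RDirProd A B\<^esub> y \<in> ?C"
      using x y by (auto simp: RDirProd_simps)
  qed
qed

lemma ring_amalgamation:
  assumes "ring A" and "ring B" and "f \<in> ring_hom A B" and "ideal J B"
  shows "ring (amalgamation A B f J)"
  using ring.subring_is_ring[OF RDirProd_ring subring_amalgamation_carrier] assms
  by (simp add: amalgamation_def)

lemma amalgamation_fst_hom: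
  "fst \<in> ring_hom (amalgamation A B f J) A"
  by (rule ring_hom_memI) (auto simp: amalgamation_def RDirProd_simps)

lemma amalgamation_snd_hom:
  "snd \<in> ring_hom (amalgamation A B f J) (image_plus_ideal A B f J)"
  by (rule ring_hom_memI) (auto simp: amalgamation_def image_plus_ideal_def RDirProd_simps, blast)

lemma amalgamation_diag_hom:
  assumes "ring B" and "f \<in> ring_hom A B" and "ideal J B"
  shows "(\<lambda>a. (a, f a)) \<in> ring_hom A (amalgamation A B f J)"
proof (rule ring_hom_memI)
  interpret ring B by fact
  fix a assume "a \<in> carrier A"
  moreover have "\<zero>\<^bsub>B\<^esub> \<in> J"
    using additive_subgroup.zero_closed[OF ideal.axioms(1)[OF assms(3)]] .
  ultimately show "(a, f a) \<in> carrier (amalgamation A B f J)"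
    using assms(2) unfolding amalgamation_def
    by (auto intro!: exI[of _ a] exI[of _ "\<zero>\<^bsub>B\<^esub>"] simp: ring_hom_closed)
qed (use assms(2) in \<open>auto simp: amalgamation_def RDirProd_simps ring_hom_mult ring_hom_add ring_hom_one\<close>)

lemma ring_image_plus_ideal:
  assumes "ring A" and "ring B" and "f \<in> ring_hom A B" and "ideal J B"
  shows "ring (image_plus_ideal A B f J)"
proof -
  have snd: "snd \<in> ring_hom (RDirProd A B) B"
    by (rule ring_hom_memI) (auto simp: RDirProd_carrier RDirProd_simps)
  interpret snd: ring_hom_ring "RDirProd A B" B snd
    using RDirProd_ring[OF assms(1,2)] assms(2) snd by (rule ring_hom_ringI2)
  have "snd ` carrier (amalgamation A B f J) = carrier (image_plus_ideal A B f J)"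
    by (force simp: amalgamation_def image_plus_ideal_def)
  then show ?thesis
    using ring.subring_is_ring[OF assms(2) snd.img_is_subring[OF subring_amalgamation_carrier[OF assms]]]
    by (simp add: image_plus_ideal_def)
qed

theorem theorem4p1:
  fixes A :: "('a, 'c) ring_scheme" and B :: "('b, 'd) ring_scheme"
    and f :: "'a \<Rightarrow> 'b" and J :: "'b set"
  assumes "ring A" and "ring B" and "f \<in> ring_hom A B"
    and "ideal J B" and "J \<noteq> carrier B"
  shows "(weak_armendariz (amalgamation A B f J) \<longrightarrow> weak_armendariz A)
    \<and> (weak_armendariz A \<and> weak_armendariz (image_plus_ideal A B f J)
         \<longrightarrow> weak_armendariz (amalgamation A B f J))"
proof (intro conjI impI)
  have AM: "ring (amalgamation A B f J)"
    using ring_amalgamation[OF assms(1-4)] .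
  show "weak_armendariz A" if "weak_armendariz (amalgamation A B f J)"
    using weak_armendariz_inj_hom[OF assms(1) AM amalgamation_diag_hom[OF assms(2-4)] _ that]
    by (simp add: inj_on_def)
  show "weak_armendariz (amalgamation A B f J)"
    if "weak_armendariz A \<and> weak_armendariz (image_plus_ideal A B f J)"
    using that
    by (intro weak_armendariz_subdirect[OF AM assms(1) ring_image_plus_ideal[OF assms(1-4)]
          amalgamation_fst_hom amalgamation_snd_hom])
       (auto simp: prod_eq_iff)
qed

end
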